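(* Let $\{|0\rangle,|1\rangle,|2\rangle\}$ be the standard basis of $\mathbb C^3$ and consider the seven product states in $\mathbb C^3\otimes\mathbb C^3$: $|\psi_1\rangle=|0\rangle\otimes|0\rangle$, $|\psi_2\rangle=(|1\rangle+|2\rangle)\otimes|0\rangle$, $|\psi_3\rangle=(|1\rangle-|2\rangle)\otimes|0\rangle$, $|\psi_4\rangle=|0\rangle\otimes(|1\rangle+|2\rangle)$, $|\psi_5\rangle=|0\rangle\otimes(|1\rangle-|2\rangle)$, $|\psi_6\rangle=|1\rangle\otimes|1\rangle$, $|\psi_7\rangle=|2\rangle\otimes|2\rangle$. These states are perfectly distinguishable by one-way LOCC with Alice measuring first and by one-way LOCC with Bob measuring first, but they are not perfectly distinguishable by a product measurement.
   Context: One-way LOCC with Alice first: there exist positive semidefinite $Q_1,\dots,Q_N$ on $\mathcal H_A$ with $\sum_jQ_j=I$ and, for each $j$, positive semidefinite $R^{(j)}_1,\dots,R^{(j)}_r$ on $\mathcal H_B$ with $\sum_kR^{(j)}_k=I$, such that $\langle\psi_l|Q_j\otimes R^{(j)}_k|\psi_l\rangle=0$ for all $j$ and $k\ne l$; with Bob first, the same with the roles of the two factors exchanged. Perfect distinguishability by a product measurement: there exist positive semidefinite $A_1,\dots,A_p$ on $\mathcal H_A$ summing to $I$ and $B_1,\dots,B_q$ on $\mathcal H_B$ summing to $I$ such that for every pair $(a,b)$ at most one index $k$ satisfies $\langle\psi_k|A_a\otimes B_b|\psi_k\rangle\ne0$. Here $\mathcal H_A=\mathcal H_B=\mathbb C^3$,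 the first tensor factor being Alice's. *)

theory Defs
  imports "HOL-Analysis.Analysis"
begin

text \<open>Vectors in C^n are complex^'n, operators are complex^'n^'n (row index first).
  The bipartite space H_A (x) H_B is complex^('a \<times> 'b), first factor Alice's.\<close>

definition tensor_vec :: "complex^'a \<Rightarrow> complex^'b \<Rightarrow> complex^('a::finite \<times> 'b::finite)" where
  "tensor_vec u v = (\<chi> p. u $ fst p * v $ snd p)"

definition tensor_mat :: "complex^'a^'a \<Rightarrow> complex^'b^'b \<Rightarrow> complex^('a::finite \<times> 'b::finite)^('a \<times> 'b)" where
  "tensor_mat A B = (\<chi> p q. A $ fst p $ fst q * B $ snd p $ snd q)"

definition expect :: "complex^'n::finite \<Rightarrow> complex^'n^'n \<Rightarrow> complex" where
  "expect x M = (\<Sum>i\<in>UNIV. \<Sum>j\<in>UNIV. cnj (x $ i) * M $ i $ j * x $ j)"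

definition psd :: "complex^'n::finite^'n \<Rightarrow> bool" where
  "psd M \<longleftrightarrow> (\<forall>x. Im (expect x M) = 0 \<and> Re (expect x M) \<ge> 0)"

definition povm :: "nat \<Rightarrow> (nat \<Rightarrow> complex^'n::finite^'n) \<Rightarrow> bool" where
  "povm N E \<longleftrightarrow> (\<forall>j\<in>{1..N}. psd (E j)) \<and> (\<Sum>j=1..N. E j) = mat 1"

text \<open>One-way LOCC, Alice first, for states psi 1..r (Bob's outcome k identifies state k).\<close>
definition oneway_A_first ::
  "(nat \<Rightarrow> complex^('a::finite \<times> 'b::finite)) \<Rightarrow> nat \<Rightarrow> bool" where
  "oneway_A_first psi r \<longleftrightarrow>
     (\<exists>N (Q :: nat \<Rightarrow> complex^'a^'a) (R :: nat \<Rightarrow> nat \<Rightarrow> complex^'b^'b).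
        povm N Q \<and> (\<forall>j\<in>{1..N}. povm r (R j)) \<and>
        (\<forall>j\<in>{1..N}. \<forall>k\<in>{1..r}. \<forall>l\<in>{1..r}. k \<noteq> l \<longrightarrow>
            expect (psi l) (tensor_mat (Q j) (R j k)) = 0))"

definition oneway_B_first ::
  "(nat \<Rightarrow> complex^('a::finite \<times> 'b::finite)) \<Rightarrow> nat \<Rightarrow> bool" where
  "oneway_B_first psi r \<longleftrightarrow>
     (\<exists>N (Q :: nat \<Rightarrow> complex^'b^'b) (R :: nat \<Rightarrow> nat \<Rightarrow> complex^'a^'a).
        povm N Q \<and> (\<forall>j\<in>{1..N}. povm r (R j)) \<and>
        (\<forall>j\<in>{1..N}. \<forall>k\<in>{1..r}. \<forall>l\<in>{1..r}. k \<noteq> l \<longrightarrow>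
            expect (psi l) (tensor_mat (R j k) (Q j)) = 0))"

definition product_distinguishable ::
  "(nat \<Rightarrow> complex^('a::finite \<times> 'b::finite)) \<Rightarrow> nat \<Rightarrow> bool" where
  "product_distinguishable psi r \<longleftrightarrow>
     (\<exists>p q (A :: nat \<Rightarrow> complex^'a^'a) (B :: nat \<Rightarrow> complex^'b^'b).
        povm p A \<and> povm q B \<and>
        (\<forall>a\<in>{1..p}. \<forall>b\<in>{1..q}.
           card {k\<in>{1..r}. expect (psi k) (tensor_mat (A a) (B b)) \<noteq> 0} \<le> 1))"

definition ket :: "3 \<Rightarrow> complex^3" where
  "ket i = axis i 1"

definition psi7 :: "nat \<Rightarrow> complex^(3 \<times> 3)" where
  "psi7 n = (if n = 1 then tensor_vec (ket 0) (ket 0)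
    else if n = 2 then tensor_vec (ket 1 + ket 2) (ket 0)
    else if n = 3 then tensor_vec (ket 1 - ket 2) (ket 0)
    else if n = 4 then tensor_vec (ket 0) (ket 1 + ket 2)
    else if n = 5 then tensor_vec (ket 0) (ket 1 - ket 2)
    else if n = 6 then tensor_vec (ket 1) (ket 1)
    else if n = 7 then tensor_vec (ket 2) (ket 2)
    else 0)"

end

theory Submission
  imports Defs
begin

(*
  One-way protocols: the first party measures in the basis |0>, |1>+|2>, |1>-|2>.  With Alice
  first, outcome |0> leaves psi1, psi4, psi5, whose second factors are |0>, |1>+|2>, |1>-|2>, and
  outcome |1>+|2> (resp. |1>-|2>) leaves psi2 (resp. psi3), psi6, psi7, whose second factors are
  |0>, |1>, |2>; Bob then measures in that orthogonal basis.  Bob first is symmetric.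

  Product measurements: for positive M with <w|M|w> = 0 one has <w+x|M|w+x> = <x|M|x>, so if M
  vanishes on |1>+|2> but not on |1>-|2>, it is nonzero on both |1> and |2>.  Some B_b is nonzero
  on |0>, so any A_a nonzero on |1>-|2> must vanish on |1>+|2> (psi2 and psi3 would share the
  outcome (a,b)); hence some A_a is nonzero on |1> and |2>.  Via psi4, psi5 the same holds for
  some B_b, and then psi6 and psi7 share the outcome (a,b).
*)

definition sesq :: "complex^'n::finite \<Rightarrow> complex^'n^'n \<Rightarrow> complex^'n \<Rightarrow> complex" where
  "sesq x M y = (\<Sum>i\<in>UNIV. \<Sum>j\<in>UNIV. cnj (x $ i) * M $ i $ j * y $ j)"

lemma expect_eq_sesq: "expect x M = sesq x M x"
  unfolding expect_def sesq_def ..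

lemma sesq_add_left: "sesq (x + y) M z = sesq x M z + sesq y M z"
  unfolding sesq_def by (simp add: algebra_simps sum.distrib)

lemma sesq_add_right: "sesq x M (y + z) = sesq x M y + sesq x M z"
  unfolding sesq_def by (simp add: algebra_simps sum.distrib)

lemma sesq_scaleR_left: "sesq (t *\<^sub>R x) M y = of_real t * sesq x M y"
  unfolding sesq_def vector_scaleR_component
  by (simp add: scaleR_conv_of_real sum_distrib_left algebra_simps)

lemma sesq_scaleR_right: "sesq x M (t *\<^sub>R y) = of_real t * sesq x M y"
  unfolding sesq_def vector_scaleR_component
  by (simp add: scaleR_conv_of_real sum_distrib_left algebra_simps)

lemma expect_add: "expect (x + y) M = expect x M + expect y M + (sesq x M y + sesq y M x)"
  unfolding expect_eq_sesq sesq_add_left sesq_add_right by simp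

lemma expect_scaleR: "expect (t *\<^sub>R x) M = of_real (t\<^sup>2) * expect x M"
  unfolding expect_eq_sesq sesq_scaleR_left sesq_scaleR_right by (simp add: power2_eq_square)

lemma expect_uminus: "expect (- x) M = expect x M"
  using expect_scaleR[of "-1" x M] by simp

lemma psd_cross_term_null:
  assumes "psd M" "expect w M = 0"
  shows "sesq w M x + sesq x M w = 0"
proof -
  define c where "c = sesq w M x + sesq x M w"
  have line: "expect (t *\<^sub>R w + x) M = of_real t * c + expect x M" for t
    unfolding expect_add expect_scaleR sesq_scaleR_left sesq_scaleR_right c_def
    using assms(2) by (simp add: algebra_simps)
  have real_nonneg:
    "Im (of_real t * c + expect x M) = 0 \<and> Re (of_real t * c + expect x M) \<ge> 0" for t
    using assms(1) line[of t] unfolding psd_def by metis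
  have "Im c = 0"
    using real_nonneg[of 0] real_nonneg[of 1] by simp
  moreover have "Re c = 0"
  proof (rule ccontr)
    assume "Re c \<noteq> 0"
    then have "(- (Re (expect x M) + 1) / Re c) * Re c + Re (expect x M) = -1"
      by simp
    with real_nonneg[of "- (Re (expect x M) + 1) / Re c"] show False
      by simp
  qed
  ultimately show ?thesis
    unfolding c_def by (simp add: complex_eq_iff)
qed

lemma psd_expect_add_null:
  assumes "psd M" "expect w M = 0"
  shows "expect (w + x) M = expect x M"
  unfolding expect_add psd_cross_term_null[OF assms] using assms(2) by simp

lemma psd_expect_diff_of_null_sum:
  assumes "psd M" "expect (u + v) M = 0"
  shows "expect (u - v) M = 4 * expect u M"
proof -
  have "expect (u - v) M = expect ((u + v) + (u - v)) M"
    using psd_expect_add_null[OF assms, of "u - v"] by (simp only:)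
  also have "(u + v) + (u - v) = u + u"
    by simp
  also have "expect (u + u) M = 4 * expect u M"
    unfolding expect_add by (simp add: expect_eq_sesq)
  finally show ?thesis .
qed

lemma psd_expect_pair_of_null_sum:
  assumes "psd M" "expect (u + v) M = 0" "expect (u - v) M \<noteq> 0"
  shows "expect u M \<noteq> 0" "expect v M \<noteq> 0"
proof -
  show "expect u M \<noteq> 0"
    using psd_expect_diff_of_null_sum[OF assms(1,2)] assms(3) by simp
  have "expect (v - u) M = 4 * expect v M"
    using psd_expect_diff_of_null_sum[of M v u] assms(1,2) by (simp add: add.commute)
  moreover have "expect (v - u) M = expect (u - v) M"
    using expect_uminus[of "u - v" M] by simp
  ultimately show "expect v M \<noteq> 0"
    using assms(3) by simp
qed

lemma expect_zero: "expect x 0 = 0"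
  unfolding expect_def by simp

lemma psd_zero: "psd 0"
  unfolding psd_def expect_zero by simp

lemma expect_sum: "expect x (\<Sum>j\<in>S. M j) = (\<Sum>j\<in>S. expect x (M j))"
proof (induction S rule: infinite_finite_induct)
  case (insert j S)
  then show ?case
    unfolding expect_def by (simp add: algebra_simps sum.distrib)
qed (simp_all add: expect_def)

lemma expect_mat_1: "expect x (mat 1) = of_real ((norm x)\<^sup>2)"
proof -
  have row: "(\<Sum>j\<in>UNIV. cnj (x $ i) * mat 1 $ i $ j * x $ j) = of_real (x $ i \<bullet> x $ i)" for i
  proof -
    have "(\<Sum>j\<in>UNIV. cnj (x $ i) * mat 1 $ i $ j * x $ j) = cnj (x $ i) * x $ i"
      by (simp add: mat_def if_distrib if_distribR cong: if_cong)
    also have "\<dots> = of_real (x $ i \<bullet> x $ i)"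
      by (simp add: inner_complex_def complex_eq_iff)
    finally show ?thesis .
  qed
  show ?thesis
    unfolding expect_def row power2_norm_eq_inner inner_vec_def by simp
qed

definition ketbra :: "real \<Rightarrow> complex^'n::finite \<Rightarrow> complex^'n^'n" where
  "ketbra c v = (\<chi> i j. of_real c * v $ i * cnj (v $ j))"

lemma expect_ketbra:
  "expect x (ketbra c v) = of_real (c * (cmod (\<Sum>j\<in>UNIV. cnj (v $ j) * x $ j))\<^sup>2)"
proof -
  let ?w = "\<Sum>j\<in>UNIV. cnj (v $ j) * x $ j"
  have "expect x (ketbra c v) = of_real c * (cnj ?w * ?w)"
    unfolding expect_def ketbra_def
    by (simp add: sum_distrib_left sum_distrib_right algebra_simps) (rule sum.swap)
  also have "cnj ?w * ?w = of_real ((cmod ?w)\<^sup>2)"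
    by (simp only: complex_norm_square mult.commute)
  finally show ?thesis
    by simp
qed

lemma psd_ketbra: "c \<ge> 0 \<Longrightarrow> psd (ketbra c v)"
  unfolding psd_def expect_ketbra by simp

lemma povm_detects_nonzero:
  assumes "povm p A" "x \<noteq> 0"
  obtains a where "a \<in> {1..p}" "expect x (A a) \<noteq> 0"
proof -
  have "(\<Sum>a=1..p. expect x (A a)) = expect x (mat 1)"
    using assms(1) unfolding povm_def by (simp add: expect_sum[symmetric])
  also have "\<dots> \<noteq> 0"
    using assms(2) by (simp add: expect_mat_1)
  finally show ?thesis
    using that by (meson sum.neutral)
qed

lemma povm_detects_both:
  assumes "povm p A" "u \<noteq> v"
    and exclusive: "\<And>a. a \<in> {1..p} \<Longrightarrow> expect (u - v) (A a) \<noteq> 0 \<Longrightarrow> expect (u + v) (A a) = 0"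
  obtains a where "a \<in> {1..p}" "expect u (A a) \<noteq> 0" "expect v (A a) \<noteq> 0"
proof -
  have "u - v \<noteq> 0"
    using assms(2) by simp
  then obtain a where a: "a \<in> {1..p}" "expect (u - v) (A a) \<noteq> 0"
    using povm_detects_nonzero[OF assms(1)] by blast
  have "psd (A a)"
    using assms(1) a(1) unfolding povm_def by blast
  from psd_expect_pair_of_null_sum[OF this exclusive[OF a] a(2)] a(1) show ?thesis
    using that by blast
qed

definition outcome3 :: "nat \<Rightarrow> nat \<Rightarrow> nat \<Rightarrow> 'm \<Rightarrow> 'm \<Rightarrow> 'm \<Rightarrow> nat \<Rightarrow> 'm::zero" where
  "outcome3 i j k X Y Z n = (if n = i then X else if n = j then Y else if n = k then Z else 0)"

lemma povm_outcome3:
  assumes "{i, j, k} \<subseteq> {1..r}" "distinct [i, j, k]"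
    and "psd X" "psd Y" "psd Z" "X + Y + Z = mat 1"
  shows "povm r (outcome3 i j k X Y Z)"
  unfolding povm_def
proof
  show "\<forall>n\<in>{1..r}. psd (outcome3 i j k X Y Z n)"
    using assms(3-5) by (simp add: outcome3_def psd_zero)
  have "(\<Sum>n=1..r. outcome3 i j k X Y Z n) = (\<Sum>n\<in>{i, j, k}. outcome3 i j k X Y Z n)"
    using assms(1) by (intro sum.mono_neutral_right) (auto simp: outcome3_def)
  also have "\<dots> = mat 1"
    using assms(2,6) by (simp add: outcome3_def add.assoc)
  finally show "(\<Sum>n=1..r. outcome3 i j k X Y Z n) = mat 1" .
qed

lemma sum_UNIV_prod: "(\<Sum>p\<in>UNIV. f p) = (\<Sum>i\<in>UNIV. \<Sum>j\<in>UNIV. f (i, j))"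
  by (simp add: sum.cartesian_product UNIV_Times_UNIV[symmetric] del: UNIV_Times_UNIV)

lemma expect_tensor: "expect (tensor_vec u v) (tensor_mat A B) = expect u A * expect v B"
proof -
  let ?X = "\<lambda>i j. cnj (u $ i) * A $ i $ j * u $ j"
  let ?Y = "\<lambda>i j. cnj (v $ i) * B $ i $ j * v $ j"
  have "expect (tensor_vec u v) (tensor_mat A B) =
      (\<Sum>p\<in>UNIV. \<Sum>q\<in>UNIV. ?X (fst p) (fst q) * ?Y (snd p) (snd q))"
    unfolding expect_def tensor_vec_def tensor_mat_def by (simp add: algebra_simps)
  also have "\<dots> = (\<Sum>i\<in>UNIV. \<Sum>i'\<in>UNIV. \<Sum>j\<in>UNIV. \<Sum>j'\<in>UNIV. ?X i j * ?Y i' j')"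
    by (simp only: sum_UNIV_prod fst_conv snd_conv)
  also have "\<dots> = (\<Sum>i\<in>UNIV. \<Sum>j\<in>UNIV. ?X i j) * (\<Sum>i'\<in>UNIV. \<Sum>j'\<in>UNIV. ?Y i' j')"
    by (simp only: sum_product)
  finally show ?thesis
    unfolding expect_def .
qed

lemma ket_component: "ket i $ j = (if j = i then 1 else 0)"
  unfolding ket_def axis_def by simp

lemma ket_nonzero: "ket i \<noteq> 0"
  unfolding ket_def by (simp add: axis_eq_0_iff)

lemma ket_inj: "ket i = ket j \<longleftrightarrow> i = j"
  unfolding ket_def by (simp add: axis_eq_axis)

lemma sum_UNIV_3: "sum f (UNIV :: 3 set) = f 0 + f 1 + f 2"
proof -
  have "(3::3) = 0"
    by simp
  from sum_3[of f, unfolded this] show ?thesis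
    by (simp add: ac_simps)
qed

lemma interval_1_3: "{1..3::nat} = {1, 2, 3}"
  by auto

lemma interval_1_7: "{1..7::nat} = {1, 2, 3, 4, 5, 6, 7}"
  by auto

definition "proj0 = ketbra 1 (ket 0)"
definition "proj1 = ketbra 1 (ket 1)"
definition "proj2 = ketbra 1 (ket 2)"
definition "proj_plus = ketbra (1/2) (ket 1 + ket 2)"
definition "proj_minus = ketbra (1/2) (ket 1 - ket 2)"

lemmas proj_defs = proj0_def proj1_def proj2_def proj_plus_def proj_minus_def

lemma psd_projs: "psd proj0" "psd proj1" "psd proj2" "psd proj_plus" "psd proj_minus"
  unfolding proj_defs by (simp_all add: psd_ketbra)

lemma proj0_1_2_sum: "proj0 + proj1 + proj2 = mat 1"
  unfolding proj_defs ketbra_def mat_def vec_eq_iff forall_3 by (simp add: ket_component)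

lemma proj0_plus_minus_sum: "proj0 + proj_plus + proj_minus = mat 1"
  unfolding proj_defs ketbra_def mat_def vec_eq_iff forall_3 by (simp add: ket_component)

definition pm_measurement :: "nat \<Rightarrow> complex^3^3" where
  "pm_measurement = outcome3 1 2 3 proj0 proj_plus proj_minus"

definition followup_A :: "nat \<Rightarrow> nat \<Rightarrow> complex^3^3" where
  "followup_A j =
    (if j = 1 then outcome3 1 4 5 proj0 proj_plus proj_minus
     else if j = 2 then outcome3 2 6 7 proj0 proj1 proj2
     else outcome3 3 6 7 proj0 proj1 proj2)"

definition followup_B :: "nat \<Rightarrow> nat \<Rightarrow> complex^3^3" where
  "followup_B j =
    (if j = 1 then outcome3 1 2 3 proj0 proj_plus proj_minus
     else if j = 2 then outcome3 4 6 7 proj0 proj1 proj2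
     else outcome3 5 6 7 proj0 proj1 proj2)"

lemma povm_pm_measurement: "povm 3 pm_measurement"
  unfolding pm_measurement_def
  by (rule povm_outcome3) (auto simp: psd_projs proj0_plus_minus_sum)

lemma povm_followup_A: "povm 7 (followup_A j)"
  unfolding followup_A_def
  by (auto intro!: povm_outcome3 simp: psd_projs proj0_plus_minus_sum proj0_1_2_sum)

lemma povm_followup_B: "povm 7 (followup_B j)"
  unfolding followup_B_def
  by (auto intro!: povm_outcome3 simp: psd_projs proj0_plus_minus_sum proj0_1_2_sum)

lemma followup_A_identifies_psi7:
  "\<forall>j\<in>{1..3}. \<forall>k\<in>{1..7}. \<forall>l\<in>{1..7}. k \<noteq> l \<longrightarrow>
     expect (psi7 l) (tensor_mat (pm_measurement j) (followup_A j k)) = 0"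
  unfolding interval_1_3 interval_1_7
  by (simp add: psi7_def expect_tensor pm_measurement_def followup_A_def outcome3_def
      proj_defs expect_ketbra expect_zero sum_UNIV_3 ket_component)

lemma followup_B_identifies_psi7:
  "\<forall>j\<in>{1..3}. \<forall>k\<in>{1..7}. \<forall>l\<in>{1..7}. k \<noteq> l \<longrightarrow>
     expect (psi7 l) (tensor_mat (followup_B j k) (pm_measurement j)) = 0"
  unfolding interval_1_3 interval_1_7
  by (simp add: psi7_def expect_tensor pm_measurement_def followup_B_def outcome3_def
      proj_defs expect_ketbra expect_zero sum_UNIV_3 ket_component)

lemma oneway_A_first_psi7: "oneway_A_first psi7 7"
  unfolding oneway_A_first_def
  using povm_pm_measurement povm_followup_A followup_A_identifies_psi7 by blast

lemma oneway_B_first_psi7: "oneway_B_first psi7 7"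
  unfolding oneway_B_first_def
  using povm_pm_measurement povm_followup_B followup_B_identifies_psi7 by blast

lemma not_product_distinguishable_psi7: "\<not> product_distinguishable psi7 7"
proof
  assume "product_distinguishable psi7 7"
  then obtain p q and A B :: "nat \<Rightarrow> complex^3^3"
    where A: "povm p A" and B: "povm q B"
      and card_le_1: "\<forall>a\<in>{1..p}. \<forall>b\<in>{1..q}.
        card {k\<in>{1..7}. expect (psi7 k) (tensor_mat (A a) (B b)) \<noteq> 0} \<le> 1"
    unfolding product_distinguishable_def by blast
  have exclusive: "expect (psi7 l) (tensor_mat (A a) (B b)) = 0"
    if "a \<in> {1..p}" "b \<in> {1..q}" "k \<in> {1..7}" "l \<in> {1..7}" "k \<noteq> l"
      and "expect (psi7 k) (tensor_mat (A a) (B b)) \<noteq> 0" for a b k l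
    using card_le_1[rule_format, OF that(1,2)] that(3-6) by (auto simp: card_le_Suc0_iff_eq)
  obtain a0 where a0: "a0 \<in> {1..p}" "expect (ket 0) (A a0) \<noteq> 0"
    using povm_detects_nonzero[OF A ket_nonzero] .
  obtain b0 where b0: "b0 \<in> {1..q}" "expect (ket 0) (B b0) \<noteq> 0"
    using povm_detects_nonzero[OF B ket_nonzero] .
  obtain a1 where a1: "a1 \<in> {1..p}" "expect (ket 1) (A a1) \<noteq> 0" "expect (ket 2) (A a1) \<noteq> 0"
  proof (rule povm_detects_both[OF A])
    show "expect (ket 1 + ket 2) (A a) = 0" if "a \<in> {1..p}" "expect (ket 1 - ket 2) (A a) \<noteq> 0" for a
      using exclusive[of a b0 3 2] that b0 by (simp add: psi7_def expect_tensor)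
  qed (simp_all add: ket_inj)
  obtain b1 where b1: "b1 \<in> {1..q}" "expect (ket 1) (B b1) \<noteq> 0" "expect (ket 2) (B b1) \<noteq> 0"
  proof (rule povm_detects_both[OF B])
    show "expect (ket 1 + ket 2) (B b) = 0" if "b \<in> {1..q}" "expect (ket 1 - ket 2) (B b) \<noteq> 0" for b
      using exclusive[of a0 b 5 4] that a0 by (simp add: psi7_def expect_tensor)
  qed (simp_all add: ket_inj)
  show False
    using exclusive[of a1 b1 6 7] a1 b1 by (simp add: psi7_def expect_tensor)
qed

theorem mainTheorem5:
  shows "oneway_A_first psi7 7 \<and> oneway_B_first psi7 7 \<and> \<not> product_distinguishable psi7 7"
  using oneway_A_first_psi7 oneway_B_first_psi7 not_product_distinguishable_psi7 by blast

end
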